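(* Let $d=2^n$, let $|z\rangle\in\mathbb{C}^d$ be a unit vector, let $\mathcal{M}_{C,z}$ be the Clifford POVM generated by $|z\rangle$, and let $W$ be any Pauli operator with $W\neq\mathbb{I}$. Then $$\|\mathcal{M}_{C,z}(W)\|_{\ell_1}=\frac{\|\Xi(|z\rangle\langle z|)\|_{\ell_1}-1}{(d+1)(d-1)}\,\|W\|_1.$$
   Context: $d=2^n$. The Pauli operators $W_1=\mathbb{I},\dots,W_{d^2}$ are all $n$-fold tensor products of $\sigma_0=\mathbb{I},\sigma_1,\sigma_2,\sigma_3$ (single-qubit Pauli matrices); the Pauli group is $\{\pm W_k,\pm iW_k\}$. The Clifford group $\mathrm{C}_n$ is the group of unitaries normalizing the Pauli group. For a unit vector $|z\rangle$, let $\{|x_k\rangle\langle x_k|\}_{k=1}^N$ be the distinct projectors in the orbit $\{U|z\rangle\langle z|U^\dagger:U\in\mathrm{C}_n\}$; $\mathcal{M}_{C,z}$ has POVM elements $\frac dN|x_k\rangle\langle x_k|$ and $\mathcal{M}_{C,z}(X)=(\mathrm{tr}(\frac dN|x_k\rangle\langle x_k|X))_{k=1}^N$. The characteristic function of a Hermitian $\rho$ is $\Xi(\rho)=(\mathrm{tr}(W_k\rho))_{k=1}^{d^2}\in\mathbb{R}^{d^2}$. $\|\cdot\|_{\ell_1}$ is the vector $\ell_1$-norm, $\|\cdot\|_1$ the trace norm. *)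

theory Defs
  imports "Jordan_Normal_Form.Char_Poly"
begin

definition adj :: "complex mat \<Rightarrow> complex mat" where
  "adj A = mat (dim_col A) (dim_row A) (\<lambda>(i,j). cnj (A $$ (j,i)))"

definition mtrace :: "complex mat \<Rightarrow> complex" where
  "mtrace A = (\<Sum>i<dim_row A. A $$ (i,i))"

text \<open>Trace norm: sum of the singular values (with multiplicity), i.e. of the square roots
  of the eigenvalues of A^dagger A, counted with algebraic multiplicity.\<close>
definition trace_norm :: "complex mat \<Rightarrow> real" where
  "trace_norm A = (let p = char_poly (adj A * A) in
     (\<Sum>a\<in>{a. poly p a = 0}. real (order a p) * sqrt (Re a)))"

text \<open>Single-qubit Pauli matrices sigma_0 = I, sigma_1, sigma_2, sigma_3 (entries r,c in {0,1}).\<close>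
definition sigma :: "nat \<Rightarrow> nat \<Rightarrow> nat \<Rightarrow> complex" where
  "sigma a r c =
    (if a = 0 then (if r = c then 1 else 0)
     else if a = 1 then (if r \<noteq> c then 1 else 0)
     else if a = 2 then (if r = c then 0 else if r = 0 then - \<i> else \<i>)
     else (if r \<noteq> c then 0 else if r = 0 then 1 else -1))"

definition bit :: "nat \<Rightarrow> nat \<Rightarrow> nat" where
  "bit k i = (i div 2 ^ k) mod 2"

definition pauli_idx :: "nat \<Rightarrow> nat list set" where
  "pauli_idx n = {a. length a = n \<and> set a \<subseteq> {0..<4}}"

text \<open>The n-fold tensor product sigma_{a_0} (x) ... (x) sigma_{a_(n-1)}, qubit k being bit k of the index.\<close>
definition pauli :: "nat \<Rightarrow> nat list \<Rightarrow> complex mat" where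
  "pauli n a = mat (2^n) (2^n) (\<lambda>(i,j). \<Prod>k<n. sigma (a ! k) (bit k i) (bit k j))"

definition pauli_ops :: "nat \<Rightarrow> complex mat set" where
  "pauli_ops n = pauli n ` pauli_idx n"

definition pauli_group :: "nat \<Rightarrow> complex mat set" where
  "pauli_group n = {c \<cdot>\<^sub>m W | c W. c \<in> {1, -1, \<i>, -\<i>} \<and> W \<in> pauli_ops n}"

definition clifford :: "nat \<Rightarrow> complex mat set" where
  "clifford n = {U. U \<in> carrier_mat (2^n) (2^n) \<and> U * adj U = 1\<^sub>m (2^n) \<and> adj U * U = 1\<^sub>m (2^n)
      \<and> (\<forall>P\<in>pauli_group n. U * P * adj U \<in> pauli_group n)
      \<and> (\<forall>P\<in>pauli_group n. adj U * P * U \<in> pauli_group n)}"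

definition proj :: "complex vec \<Rightarrow> complex mat" where
  "proj z = mat (dim_vec z) (dim_vec z) (\<lambda>(i,j). z $ i * cnj (z $ j))"

definition clifford_orbit :: "nat \<Rightarrow> complex vec \<Rightarrow> complex mat set" where
  "clifford_orbit n z = {U * proj z * adj U | U. U \<in> clifford n}"

text \<open>l1-norm of M_{C,z}(X) = (tr((d/N)|x_k><x_k| X))_k, over the distinct orbit projectors.\<close>
definition povm_l1 :: "nat \<Rightarrow> complex vec \<Rightarrow> complex mat \<Rightarrow> real" where
  "povm_l1 n z X = (let N = card (clifford_orbit n z) in
     (\<Sum>P\<in>clifford_orbit n z. cmod (mtrace ((of_real (2^n / real N) \<cdot>\<^sub>m P) * X))))"

text \<open>l1-norm of the characteristic function Xi(rho) = (tr(W_k rho))_k.\<close>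
definition char_l1 :: "nat \<Rightarrow> complex mat \<Rightarrow> real" where
  "char_l1 n \<rho> = (\<Sum>a\<in>pauli_idx n. cmod (mtrace (pauli n a * \<rho>)))"

end

theory Submission
  imports Defs "HOL-Library.FuncSet"
begin

text \<open>
  Write \<open>\<rho> = |z\<rangle>\<langle>z|\<close>, \<open>N\<close> for the size of its Clifford orbit and
  \<open>S(X) = \<Sum>\<^sub>P |tr(P X)|\<close> for the sum over the orbit, so that \<open>\<M>\<^sub>C\<^sub>,\<^sub>z(W)\<close> has \<open>\<ell>\<^sub>1\<close>-norm
  \<open>(d/N) S(W)\<close>. Conjugating the orbit by a Clifford unitary permutes it, hence
  \<open>S(V W V\<^sup>\<dagger>) = S(W)\<close>, and since the Clifford group acts transitively on the non-identity
  Pauli operators, \<open>S\<close> takes one common value on all \<open>d\<^sup>2 - 1\<close> of them. Clifford conjugation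
  also permutes the Paulis up to phases, so every orbit element has the same characteristic
  \<open>\<ell>\<^sub>1\<close>-norm as \<open>\<rho>\<close>; summing \<open>S\<close> over all Paulis therefore gives \<open>N \<parallel>\<Xi>(\<rho>)\<parallel>\<^sub>\<ell>\<^sub>1\<close>, and the
  identity contributes \<open>S(\<one>) = N\<close>. Solving for the common value and using
  \<open>\<parallel>W\<parallel>\<^sub>1 = d\<close> gives the formula.
\<close>

lemma sum_lessThan_add: "(\<Sum>i<a+b. f i) = (\<Sum>i<a. f i) + (\<Sum>i<b. f (a+i::nat))"
  by (induction b) (auto simp: add_ac)

lemma bit_less_2: "bit k i < 2"
  unfolding bit_def by simp

lemma bit_below_power: "i < 2^n \<Longrightarrow> bit n i = 0"
  unfolding bit_def by simp

lemma bit_power_add_top: "i < 2^n \<Longrightarrow> bit n (2^n + i) = 1"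
  unfolding bit_def by simp

lemma bit_power_add_low:
  assumes k: "k < n" and i: "i < 2^n"
  shows "bit k (2^n + i) = bit k i"
proof -
  have "(2::nat)^n = 2^k * 2^(n-k)" using k by (simp add: power_add[symmetric])
  hence "(2^n + i) div 2^k = 2^(n-k) + i div 2^k" by simp
  moreover obtain m where "(2::nat)^(n-k) = 2*m"
    using k by (metis evenE even_power even_numeral zero_less_diff)
  ultimately show ?thesis unfolding bit_def by simp
qed

lemma sum_bits_prod:
  fixes g :: "nat \<Rightarrow> nat \<Rightarrow> 'a::comm_semiring_1"
  shows "(\<Sum>i<2^n. \<Prod>k<n. g k (bit k i)) = (\<Prod>k<n. \<Sum>t<2. g k t)"
proof (induction n)
  case 0 then show ?case by simp
next
  case (Suc n)
  have "(\<Sum>i<2^(Suc n). \<Prod>k<Suc n. g k (bit k i))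
      = (\<Sum>i<2^n. \<Prod>k<Suc n. g k (bit k i)) + (\<Sum>i<2^n. \<Prod>k<Suc n. g k (bit k (2^n+i)))"
    using sum_lessThan_add[where a="2^n" and b="2^n"] by (simp add: mult_2)
  also have "(\<Sum>i<2^n. \<Prod>k<Suc n. g k (bit k i)) = (\<Sum>i<2^n. \<Prod>k<n. g k (bit k i)) * g n 0"
    by (simp add: sum_distrib_right bit_below_power)
  also have "(\<Sum>i<2^n. \<Prod>k<Suc n. g k (bit k (2^n+i))) = (\<Sum>i<2^n. \<Prod>k<n. g k (bit k i)) * g n 1"
    by (auto simp: sum_distrib_right bit_power_add_top bit_power_add_low intro!: sum.cong prod.cong)
  finally show ?case using Suc by (simp add: distrib_left numeral_2_eq_2)
qed

lemma bits_eq_imp_eq: "i < 2^n \<Longrightarrow> j < 2^n \<Longrightarrow> (\<forall>k<n. bit k i = bit k j) \<Longrightarrow> i = j"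
proof (induction n arbitrary: i j)
  case 0 then show ?case by simp
next
  case (Suc n)
  have "i div 2 = j div 2"
  proof (rule Suc.IH)
    show "i div 2 < 2^n" "j div 2 < 2^n" using Suc.prems by auto
    show "\<forall>k<n. bit k (i div 2) = bit k (j div 2)"
    proof (intro allI impI)
      fix k assume "k < n"
      then have "bit (Suc k) i = bit (Suc k) j" using Suc.prems by auto
      then show "bit k (i div 2) = bit k (j div 2)" unfolding bit_def by (simp add: div_mult2_eq)
    qed
  qed
  moreover have "i mod 2 = j mod 2"
    using Suc.prems(3) unfolding bit_def by (metis div_by_1 power_0 zero_less_Suc)
  ultimately show ?case by (metis div_mult_mod_eq)
qed

lemma dim_adj [simp]: "dim_row (adj A) = dim_col A" "dim_col (adj A) = dim_row A"
  unfolding adj_def by auto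

lemma adj_carrier_mat [simp]: "A \<in> carrier_mat m n \<Longrightarrow> adj A \<in> carrier_mat n m"
  unfolding adj_def by auto

lemma index_adj [simp]: "i < dim_col A \<Longrightarrow> j < dim_row A \<Longrightarrow> adj A $$ (i,j) = cnj (A $$ (j,i))"
  unfolding adj_def by auto

lemma adj_adj [simp]: "adj (adj A) = A"
  by (rule eq_matI) auto

lemma adj_mult: "A \<in> carrier_mat m k \<Longrightarrow> B \<in> carrier_mat k l \<Longrightarrow> adj (A * B) = adj B * adj A"
  by (rule eq_matI) (auto simp: scalar_prod_def mult.commute intro!: sum.cong)

lemma adj_one [simp]: "adj (1\<^sub>m n) = 1\<^sub>m n"
  by (rule eq_matI) auto

lemma adj_smult: "adj (c \<cdot>\<^sub>m A) = cnj c \<cdot>\<^sub>m adj A"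
  by (rule eq_matI) auto

lemma adj_add: "A \<in> carrier_mat m k \<Longrightarrow> B \<in> carrier_mat m k \<Longrightarrow> adj (A + B) = adj A + adj B"
  by (rule eq_matI) auto

lemma smult_smult_mat: "a \<cdot>\<^sub>m (b \<cdot>\<^sub>m A) = (a * b) \<cdot>\<^sub>m (A :: 'a::semigroup_mult mat)"
  by (rule eq_matI) (auto simp: mult.assoc)

lemma mult_carrier_square: "A \<in> carrier_mat m m \<Longrightarrow> B \<in> carrier_mat m m \<Longrightarrow> A * B \<in> carrier_mat m m"
  by simp

lemma assoc_mult_square:
  "A \<in> carrier_mat m m \<Longrightarrow> B \<in> carrier_mat m m \<Longrightarrow> C \<in> carrier_mat m m \<Longrightarrow> A * B * C = A * (B * C)"
  by (rule assoc_mult_mat)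

lemma mtrace_comm:
  "A \<in> carrier_mat m k \<Longrightarrow> B \<in> carrier_mat k m \<Longrightarrow> mtrace (A * B) = mtrace (B * A)"
  unfolding mtrace_def apply (simp add: scalar_prod_def atLeast0LessThan)
  by (subst sum.swap) (simp add: mult.commute)

lemma mtrace_smult: "A \<in> carrier_mat m m \<Longrightarrow> mtrace (c \<cdot>\<^sub>m A) = c * mtrace A"
  unfolding mtrace_def by (auto simp: sum_distrib_left)

lemma mtrace_smult_mult:
  "A \<in> carrier_mat m m \<Longrightarrow> B \<in> carrier_mat m m \<Longrightarrow> mtrace ((c \<cdot>\<^sub>m A) * B) = c * mtrace (A * B)"
  by (simp add: mult_smult_assoc_mat mtrace_smult[of _ m])

lemma mtrace_mult_conj:
  assumes U: "U \<in> carrier_mat m m" and M: "M \<in> carrier_mat m m" and X: "X \<in> carrier_mat m m"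
  shows "mtrace (X * (U * M * adj U)) = mtrace (adj U * X * U * M)"
proof -
  have "mtrace (X * (U * M * adj U)) = mtrace ((X * U * M) * adj U)"
    using U M X by (simp add: assoc_mult_square[where m=m])
  also have "\<dots> = mtrace (adj U * (X * U * M))"
    using U M X by (intro mtrace_comm[of _ m m]) auto
  also have "adj U * (X * U * M) = adj U * X * U * M"
    using U M X by (simp add: assoc_mult_square[where m=m])
  finally show ?thesis .
qed

lemma mtrace_mult_entries: "M \<in> carrier_mat m m \<Longrightarrow> A \<in> carrier_mat m m \<Longrightarrow>
   mtrace (A * M) = (\<Sum>q<m. \<Sum>p<m. A $$ (q,p) * M $$ (p,q))"
  unfolding mtrace_def by (auto simp: scalar_prod_def atLeast0LessThan)

section \<open>Tensor products over qubits\<close>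

definition kron :: "nat \<Rightarrow> (nat \<Rightarrow> nat \<Rightarrow> nat \<Rightarrow> complex) \<Rightarrow> complex mat" where
  "kron n f = mat (2^n) (2^n) (\<lambda>(i,j). \<Prod>k<n. f k (bit k i) (bit k j))"

lemma kron_carrier [simp]: "kron n f \<in> carrier_mat (2^n) (2^n)"
  "dim_row (kron n f) = 2^n" "dim_col (kron n f) = 2^n"
  unfolding kron_def by auto

lemma index_kron: "i < 2^n \<Longrightarrow> j < 2^n \<Longrightarrow> kron n f $$ (i,j) = (\<Prod>k<n. f k (bit k i) (bit k j))"
  unfolding kron_def by auto

lemma kron_mult: "kron n f * kron n g = kron n (\<lambda>k r c. \<Sum>t<2. f k r t * g k t c)"
proof (rule eq_matI)
  fix i j assume "i < dim_row (kron n (\<lambda>k r c. \<Sum>t<2. f k r t * g k t c))"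
    and "j < dim_col (kron n (\<lambda>k r c. \<Sum>t<2. f k r t * g k t c))"
  then have i: "i < 2^n" and j: "j < 2^n" by auto
  have "(kron n f * kron n g) $$ (i,j)
      = (\<Sum>l<2^n. (\<Prod>k<n. f k (bit k i) (bit k l)) * (\<Prod>k<n. g k (bit k l) (bit k j)))"
    using i j by (auto simp: scalar_prod_def index_kron atLeast0LessThan intro!: sum.cong)
  also have "\<dots> = (\<Sum>l<2^n. \<Prod>k<n. f k (bit k i) (bit k l) * g k (bit k l) (bit k j))"
    by (simp add: prod.distrib)
  also have "\<dots> = (\<Prod>k<n. \<Sum>t<2. f k (bit k i) t * g k t (bit k j))"
    by (rule sum_bits_prod)
  finally show "(kron n f * kron n g) $$ (i,j) = kron n (\<lambda>k r c. \<Sum>t<2. f k r t * g k t c) $$ (i,j)"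
    using i j by (simp add: index_kron)
qed auto

lemma mtrace_kron: "mtrace (kron n f) = (\<Prod>k<n. \<Sum>t<2. f k t t)"
proof -
  have "mtrace (kron n f) = (\<Sum>i<2^n. \<Prod>k<n. f k (bit k i) (bit k i))"
    unfolding mtrace_def by (simp add: index_kron)
  also have "\<dots> = (\<Prod>k<n. \<Sum>t<2. f k t t)" by (rule sum_bits_prod)
  finally show ?thesis .
qed

lemma adj_kron: "adj (kron n f) = kron n (\<lambda>k r c. cnj (f k c r))"
  by (rule eq_matI) (auto simp: index_kron)

lemma kron_cong:
  "(\<And>k r c. k < n \<Longrightarrow> r < 2 \<Longrightarrow> c < 2 \<Longrightarrow> f k r c = g k r c) \<Longrightarrow> kron n f = kron n g"
  unfolding kron_def by (auto intro!: cong_mat prod.cong simp: bit_less_2)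

lemma kron_smult: "kron n (\<lambda>k r c. h k * f k r c) = (\<Prod>k<n. h k) \<cdot>\<^sub>m kron n f"
  by (rule eq_matI) (auto simp: index_kron prod.distrib)

lemma kron_one: "kron n (\<lambda>k r c. if r = c then 1 else 0) = 1\<^sub>m (2^n)"
proof (rule eq_matI)
  fix i j assume "i < dim_row (1\<^sub>m (2^n) :: complex mat)" "j < dim_col (1\<^sub>m (2^n) :: complex mat)"
  then have i: "i < 2^n" and j: "j < 2^n" by auto
  show "kron n (\<lambda>k r c. if r = c then 1 else 0) $$ (i, j) = 1\<^sub>m (2^n) $$ (i, j)"
  proof (cases "i = j")
    case True then show ?thesis using i by (simp add: index_kron)
  next
    case False
    then obtain k where "k < n" "bit k i \<noteq> bit k j" using bits_eq_imp_eq[OF i j] by blast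
    then show ?thesis using i j False by (auto simp: index_kron prod_zero_iff)
  qed
qed auto

lemma pauli_eq_kron: "pauli n a = kron n (\<lambda>k. sigma (a!k))"
  unfolding pauli_def kron_def by simp

section \<open>Pauli operators\<close>

lemma finite_pauli_idx: "finite (pauli_idx n)"
  unfolding pauli_idx_def using finite_lists_length_eq[of "{0..<4::nat}" n] by (simp add: conj_commute)

lemma pauli_idx_0: "pauli_idx 0 = {[]}"
  unfolding pauli_idx_def by auto

lemma replicate_0_in_pauli_idx: "replicate n 0 \<in> pauli_idx n"
  unfolding pauli_idx_def by auto

lemma map_in_pauli_idx: "(\<And>k. k < n \<Longrightarrow> f k < 4) \<Longrightarrow> map f [0..<n] \<in> pauli_idx n"
  unfolding pauli_idx_def by auto

lemma pauli_idx_length: "a \<in> pauli_idx n \<Longrightarrow> length a = n"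
  unfolding pauli_idx_def by auto

lemma pauli_idx_nth_less: "a \<in> pauli_idx n \<Longrightarrow> k < n \<Longrightarrow> a ! k < 4"
  unfolding pauli_idx_def by (auto simp: subset_iff)

lemma pauli_idx_Suc: "pauli_idx (Suc n) = (\<lambda>(a,t). a @ [t]) ` (pauli_idx n \<times> {..<4})"
proof
  show "pauli_idx (Suc n) \<subseteq> (\<lambda>(a,t). a @ [t]) ` (pauli_idx n \<times> {..<4})"
  proof
    fix b assume b: "b \<in> pauli_idx (Suc n)"
    then have ne: "b \<noteq> []" and s: "set b \<subseteq> {0..<4}" "length b = Suc n"
      unfolding pauli_idx_def by auto
    have "butlast b \<in> pauli_idx n"
      unfolding pauli_idx_def using s in_set_butlastD[of _ b] by auto
    moreover have "last b \<in> {0..<4}" using s(1) last_in_set[OF ne] by blast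
    ultimately show "b \<in> (\<lambda>(a,t). a @ [t]) ` (pauli_idx n \<times> {..<4})"
      using append_butlast_last_id[OF ne] by (intro image_eqI[where x="(butlast b, last b)"]) auto
  qed
qed (auto simp: pauli_idx_def)

lemma sum_pauli_idx_prod:
  fixes g :: "nat \<Rightarrow> nat \<Rightarrow> 'a::comm_semiring_1"
  shows "(\<Sum>a\<in>pauli_idx n. \<Prod>k<n. g k (a!k)) = (\<Prod>k<n. \<Sum>t<4. g k t)"
proof (induction n)
  case 0 then show ?case by (simp add: pauli_idx_0)
next
  case (Suc n)
  have inj: "inj_on (\<lambda>(a,t). a @ [t]) (pauli_idx n \<times> {..<4})" by (auto simp: inj_on_def)
  have "(\<Sum>a\<in>pauli_idx (Suc n). \<Prod>k<Suc n. g k (a!k))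
      = (\<Sum>(a,t)\<in>pauli_idx n \<times> {..<4}. \<Prod>k<Suc n. g k ((a@[t])!k))"
    unfolding pauli_idx_Suc by (subst sum.reindex[OF inj]) (simp add: case_prod_unfold)
  also have "\<dots> = (\<Sum>(a,t)\<in>pauli_idx n \<times> {..<4}. (\<Prod>k<n. g k (a!k)) * g n t)"
    by (rule sum.cong) (auto simp: pauli_idx_def nth_append intro!: prod.cong)
  also have "\<dots> = (\<Sum>a\<in>pauli_idx n. \<Prod>k<n. g k (a!k)) * (\<Sum>t<4. g n t)"
    by (simp add: sum.cartesian_product[symmetric] sum_product)
  finally show ?case using Suc by simp
qed

lemma card_pauli_idx: "card (pauli_idx n) = 4^n"
proof -
  have "real (card (pauli_idx n)) = (\<Sum>a\<in>pauli_idx n. \<Prod>k<n. (\<lambda>_ _. 1::real) k (a!k))"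
    by simp
  also have "\<dots> = 4^n" by (subst sum_pauli_idx_prod) simp
  finally show ?thesis by (metis of_nat_eq_of_nat_power_cancel_iff of_nat_numeral)
qed

definition phases :: "complex set" where
  "phases = {1, -1, \<i>, -\<i>}"

lemma finite_phases: "finite phases"
  unfolding phases_def by auto

lemma phases_mult: "x \<in> phases \<Longrightarrow> y \<in> phases \<Longrightarrow> x * y \<in> phases"
  unfolding phases_def by auto

lemma norm_phases: "x \<in> phases \<Longrightarrow> cmod x = 1"
  unfolding phases_def by auto

lemma prod_phases: "(\<And>k. k < (n::nat) \<Longrightarrow> f k \<in> phases) \<Longrightarrow> (\<Prod>k<n. f k) \<in> phases"
proof (induction n)
  case 0 then show ?case by (simp add: phases_def)
next
  case (Suc n) then show ?case by (simp add: phases_mult)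
qed

text \<open>
  The product \<open>\<sigma>\<^sub>x \<sigma>\<^sub>y\<close> of two single-qubit Paulis is \<open>sigma_phase x y \<cdot> \<sigma>\<^bsub>sigma_label x y\<^esub>\<close>;
  for distinct non-identity labels the product label is the third one, \<open>6 - x - y\<close>.
\<close>

definition sigma_label :: "nat \<Rightarrow> nat \<Rightarrow> nat" where
  "sigma_label x y = (if x = 0 then y else if y = 0 then x else if x = y then 0 else 6 - x - y)"

definition sigma_phase :: "nat \<Rightarrow> nat \<Rightarrow> complex" where
  "sigma_phase x y = (if x = 0 \<or> y = 0 \<or> x = y then 1 else
     if (x = 1 \<and> y = 2) \<or> (x = 2 \<and> y = 3) \<or> (x = 3 \<and> y = 1) then \<i> else -\<i>)"

definition sigma_anticomm :: "nat \<Rightarrow> nat \<Rightarrow> bool" where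
  "sigma_anticomm x y = (x \<noteq> 0 \<and> y \<noteq> 0 \<and> x \<noteq> y)"

lemma sigma_label_less: "x < 4 \<Longrightarrow> y < 4 \<Longrightarrow> sigma_label x y < 4"
  unfolding sigma_label_def by auto

lemma sigma_phase_in_phases: "sigma_phase x y \<in> phases"
  unfolding sigma_phase_def phases_def by auto

lemma less_4_cases: "(x::nat) < 4 \<Longrightarrow> x = 0 \<or> x = 1 \<or> x = 2 \<or> x = 3"
  by auto

lemma less_2_cases: "(x::nat) < 2 \<Longrightarrow> x = 0 \<or> x = 1"
  by auto

lemma sigma_mult: "x < 4 \<Longrightarrow> y < 4 \<Longrightarrow> r < 2 \<Longrightarrow> c < 2 \<Longrightarrow>
  (\<Sum>t<2. sigma x r t * sigma y t c) = sigma_phase x y * sigma (sigma_label x y) r c"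
  apply (drule less_4_cases, drule less_4_cases, drule less_2_cases, drule less_2_cases)
  by (elim disjE; simp add: sigma_def sigma_phase_def sigma_label_def numeral_2_eq_2 lessThan_Suc)

lemma sigma_mult_self: "x < 4 \<Longrightarrow> r < 2 \<Longrightarrow> c < 2 \<Longrightarrow>
  (\<Sum>t<2. sigma x r t * sigma x t c) = (if r = c then 1 else 0)"
  apply (drule less_4_cases, drule less_2_cases, drule less_2_cases)
  by (elim disjE; simp add: sigma_def numeral_2_eq_2 lessThan_Suc)

lemma sigma_mult_commute: "x < 4 \<Longrightarrow> y < 4 \<Longrightarrow> r < 2 \<Longrightarrow> c < 2 \<Longrightarrow>
  (\<Sum>t<2. sigma x r t * sigma y t c)
    = (if sigma_anticomm x y then -1 else 1) * (\<Sum>t<2. sigma y r t * sigma x t c)"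
  apply (drule less_4_cases, drule less_4_cases, drule less_2_cases, drule less_2_cases)
  by (elim disjE; simp add: sigma_def sigma_anticomm_def numeral_2_eq_2 lessThan_Suc)

lemma cnj_sigma: "x < 4 \<Longrightarrow> r < 2 \<Longrightarrow> c < 2 \<Longrightarrow> cnj (sigma x c r) = sigma x r c"
  apply (drule less_4_cases, drule less_2_cases, drule less_2_cases)
  by (elim disjE; simp add: sigma_def)

lemma sigma_completeness: "q < 2 \<Longrightarrow> p < 2 \<Longrightarrow> i < 2 \<Longrightarrow> j < 2 \<Longrightarrow>
  (\<Sum>t<4. sigma t q p * sigma t i j) = (if q = j \<and> p = i then 2 else 0)"
  apply (drule less_2_cases, drule less_2_cases, drule less_2_cases, drule less_2_cases)
  by (elim disjE; simp add: sigma_def numeral_eq_Suc lessThan_Suc)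

lemma trace_sigma_mult: "x < 4 \<Longrightarrow> y < 4 \<Longrightarrow>
  (\<Sum>t<2. \<Sum>s<2. sigma x t s * sigma y s t) = (if x = y then 2 else 0)"
  apply (drule less_4_cases, drule less_4_cases)
  by (elim disjE; simp add: sigma_def numeral_2_eq_2 lessThan_Suc)

lemma pauli_carrier [simp]: "pauli n a \<in> carrier_mat (2^n) (2^n)"
  "dim_row (pauli n a) = 2^n" "dim_col (pauli n a) = 2^n"
  unfolding pauli_eq_kron by auto

definition pauli_idx_mult :: "nat list \<Rightarrow> nat list \<Rightarrow> nat list" where
  "pauli_idx_mult a b = map (\<lambda>k. sigma_label (a!k) (b!k)) [0..<length a]"

lemma pauli_idx_mult_in:
  assumes a: "a \<in> pauli_idx n" and b: "b \<in> pauli_idx n"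
  shows "pauli_idx_mult a b \<in> pauli_idx n"
  unfolding pauli_idx_mult_def pauli_idx_length[OF a]
  by (rule map_in_pauli_idx) (simp add: sigma_label_less pauli_idx_nth_less[OF a] pauli_idx_nth_less[OF b])

lemma pauli_mult:
  assumes a: "a \<in> pauli_idx n" and b: "b \<in> pauli_idx n"
  shows "pauli n a * pauli n b = (\<Prod>k<n. sigma_phase (a!k) (b!k)) \<cdot>\<^sub>m pauli n (pauli_idx_mult a b)"
proof -
  have "pauli n a * pauli n b
      = kron n (\<lambda>k r c. sigma_phase (a!k) (b!k) * sigma (pauli_idx_mult a b ! k) r c)"
    unfolding pauli_eq_kron kron_mult
    by (rule kron_cong)
      (simp add: sigma_mult pauli_idx_nth_less[OF a] pauli_idx_nth_less[OF b] pauli_idx_mult_def pauli_idx_length[OF a])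
  then show ?thesis by (simp add: kron_smult pauli_eq_kron)
qed

lemma pauli_mult_self:
  assumes a: "a \<in> pauli_idx n"
  shows "pauli n a * pauli n a = 1\<^sub>m (2^n)"
proof -
  have "pauli n a * pauli n a = kron n (\<lambda>k r c. if r = c then 1 else 0)"
    unfolding pauli_eq_kron kron_mult
    by (rule kron_cong) (simp add: sigma_mult_self pauli_idx_nth_less[OF a])
  then show ?thesis by (simp add: kron_one)
qed

lemma adj_pauli:
  assumes a: "a \<in> pauli_idx n"
  shows "adj (pauli n a) = pauli n a"
  unfolding pauli_eq_kron adj_kron
  by (rule kron_cong) (simp add: cnj_sigma pauli_idx_nth_less[OF a])

lemma pauli_replicate_0: "pauli n (replicate n 0) = 1\<^sub>m (2^n)"
proof -
  have "pauli n (replicate n 0) = kron n (\<lambda>k r c. if r = c then 1 else 0)"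
    unfolding pauli_eq_kron by (rule kron_cong) (simp add: sigma_def)
  then show ?thesis by (simp add: kron_one)
qed

definition comm_sign :: "nat \<Rightarrow> nat list \<Rightarrow> nat list \<Rightarrow> complex" where
  "comm_sign n a b = (\<Prod>k<n. if sigma_anticomm (a!k) (b!k) then -1 else 1)"

lemma comm_sign_cases: "comm_sign n a b = 1 \<or> comm_sign n a b = -1"
  unfolding comm_sign_def by (induction n) auto

lemma comm_sign_commute: "comm_sign n a b = comm_sign n b a"
  unfolding comm_sign_def sigma_anticomm_def by (rule prod.cong) auto

lemma pauli_mult_commute:
  assumes a: "a \<in> pauli_idx n" and b: "b \<in> pauli_idx n"
  shows "pauli n a * pauli n b = comm_sign n a b \<cdot>\<^sub>m (pauli n b * pauli n a)"
proof -
  have "pauli n a * pauli n b = kron n (\<lambda>k r c. (if sigma_anticomm (a!k) (b!k) then -1 else 1) *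
      (\<Sum>t<2. sigma (b!k) r t * sigma (a!k) t c))"
    unfolding pauli_eq_kron kron_mult
    by (rule kron_cong, rule sigma_mult_commute) (simp_all add: pauli_idx_nth_less[OF a] pauli_idx_nth_less[OF b])
  also have "\<dots> = comm_sign n a b \<cdot>\<^sub>m kron n (\<lambda>k r c. \<Sum>t<2. sigma (b!k) r t * sigma (a!k) t c)"
    unfolding comm_sign_def by (rule kron_smult)
  finally show ?thesis
    unfolding pauli_eq_kron kron_mult .
qed

lemma mtrace_pauli_mult:
  assumes a: "a \<in> pauli_idx n" and b: "b \<in> pauli_idx n"
  shows "mtrace (pauli n a * pauli n b) = (if a = b then 2^n else 0)"
proof -
  have "mtrace (pauli n a * pauli n b) = (\<Prod>k<n. if a!k = b!k then 2 else 0)"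
    unfolding pauli_eq_kron kron_mult mtrace_kron
    by (rule prod.cong) (simp_all add: trace_sigma_mult pauli_idx_nth_less[OF a] pauli_idx_nth_less[OF b])
  also have "\<dots> = (if a = b then 2^n else 0)"
  proof (cases "a = b")
    case False
    then obtain k where "k < n" "a!k \<noteq> b!k"
      using pauli_idx_length[OF a] pauli_idx_length[OF b] nth_equalityI by metis
    then show ?thesis using False by (auto simp: prod_zero_iff)
  qed simp
  finally show ?thesis .
qed

lemma pauli_completeness:
  assumes i: "i < 2^n" and j: "j < 2^n" and q: "q < 2^n" and p: "p < 2^n"
  shows "(\<Sum>a\<in>pauli_idx n. pauli n a $$ (q,p) * pauli n a $$ (i,j))
    = (if q = j \<and> p = i then 2^n else 0)"
proof -
  have "(\<Sum>a\<in>pauli_idx n. pauli n a $$ (q,p) * pauli n a $$ (i,j))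
     = (\<Sum>a\<in>pauli_idx n. \<Prod>k<n. sigma (a!k) (bit k q) (bit k p) * sigma (a!k) (bit k i) (bit k j))"
    using i j q p by (simp add: pauli_eq_kron index_kron prod.distrib)
  also have "\<dots> = (\<Prod>k<n. \<Sum>t<4. sigma t (bit k q) (bit k p) * sigma t (bit k i) (bit k j))"
    by (rule sum_pauli_idx_prod)
  also have "\<dots> = (\<Prod>k<n. if bit k q = bit k j \<and> bit k p = bit k i then 2 else 0)"
    by (rule prod.cong) (simp_all add: sigma_completeness bit_less_2)
  also have "\<dots> = (if q = j \<and> p = i then 2^n else 0)"
  proof (cases "q = j \<and> p = i")
    case False
    then obtain k where "k < n" "bit k q \<noteq> bit k j \<or> bit k p \<noteq> bit k i"
      using bits_eq_imp_eq[OF q j] bits_eq_imp_eq[OF p i] by blast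
    then show ?thesis using False by (auto simp: prod_zero_iff)
  qed simp
  finally show ?thesis .
qed

lemma pauli_expansion_entry:
  assumes M: "M \<in> carrier_mat (2^n) (2^n)" and i: "i < 2^n" and j: "j < 2^n"
  shows "M $$ (i,j) = (\<Sum>a\<in>pauli_idx n. mtrace (pauli n a * M) * pauli n a $$ (i,j)) / 2^n"
proof -
  let ?W = "\<lambda>a q p. pauli n a $$ (q,p)"
  have "(\<Sum>a\<in>pauli_idx n. mtrace (pauli n a * M) * ?W a i j)
     = (\<Sum>a\<in>pauli_idx n. \<Sum>q<2^n. \<Sum>p<2^n. M $$ (p,q) * (?W a q p * ?W a i j))"
    by (simp only: mtrace_mult_entries[OF M pauli_carrier(1)] sum_distrib_right) (simp add: mult_ac)
  also have "\<dots> = (\<Sum>q<2^n. \<Sum>a\<in>pauli_idx n. \<Sum>p<2^n. M $$ (p,q) * (?W a q p * ?W a i j))"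
    by (rule sum.swap)
  also have "\<dots> = (\<Sum>q<2^n. \<Sum>p<2^n. M $$ (p,q) * (\<Sum>a\<in>pauli_idx n. ?W a q p * ?W a i j))"
    by (intro sum.cong refl) (subst sum.swap, simp only: sum_distrib_left)
  also have "\<dots> = (\<Sum>q<2^n. \<Sum>p<2^n. if p = i then (if q = j then M $$ (p,q) * 2^n else 0) else 0)"
    by (intro sum.cong refl) (simp add: pauli_completeness i j)
  also have "\<dots> = M $$ (i,j) * 2^n"
    using i j by (simp add: sum.delta')
  finally show ?thesis by simp
qed

lemma eq_mat_if_pauli_coeffs_eq:
  assumes M: "M \<in> carrier_mat (2^n) (2^n)" and M': "M' \<in> carrier_mat (2^n) (2^n)"
    and eq: "\<And>a. a \<in> pauli_idx n \<Longrightarrow> mtrace (pauli n a * M) = mtrace (pauli n a * M')"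
  shows "M = M'"
proof (rule eq_matI)
  fix i j assume "i < dim_row M'" "j < dim_col M'"
  then have i: "i < 2^n" and j: "j < 2^n" using M' by auto
  show "M $$ (i,j) = M' $$ (i,j)"
    using pauli_expansion_entry[OF M i j] pauli_expansion_entry[OF M' i j] eq by simp
qed (use M M' in simp_all)

lemma trace_norm_pauli:
  assumes a: "a \<in> pauli_idx n"
  shows "trace_norm (pauli n a) = 2^n"
proof -
  let ?d = "(2::nat)^n"
  have "adj (pauli n a) * pauli n a = 1\<^sub>m ?d" using adj_pauli[OF a] pauli_mult_self[OF a] by simp
  then have cp: "char_poly (adj (pauli n a) * pauli n a) = [:-1,1:]^?d"
    using char_poly_upper_triangular[of "1\<^sub>m ?d :: complex mat" ?d] by (simp add: prod_list_replicate)
  have roots: "{x. poly ([:-1,1:]^?d) x = 0} = {1::complex}"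
    by auto
  have "order (1::complex) ([:-1,1:]^?d) = ?d" using order_power_n_n[of "1::complex" ?d] by simp
  then show ?thesis unfolding trace_norm_def Let_def cp roots by simp
qed

lemma mem_pauli_group_iff:
  "Q \<in> pauli_group n \<longleftrightarrow> (\<exists>c\<in>phases. \<exists>a\<in>pauli_idx n. Q = c \<cdot>\<^sub>m pauli n a)"
  unfolding pauli_group_def pauli_ops_def phases_def by auto

lemma pauli_group_carrier: "Q \<in> pauli_group n \<Longrightarrow> Q \<in> carrier_mat (2^n) (2^n)"
  unfolding mem_pauli_group_iff by auto

lemma pauli_in_pauli_group: "a \<in> pauli_idx n \<Longrightarrow> pauli n a \<in> pauli_group n"
  unfolding mem_pauli_group_iff by (rule bexI[of _ 1], rule bexI[of _ a]) (auto simp: phases_def)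

lemma pauli_group_smult: "c \<in> phases \<Longrightarrow> Q \<in> pauli_group n \<Longrightarrow> c \<cdot>\<^sub>m Q \<in> pauli_group n"
  unfolding mem_pauli_group_iff by (auto simp: phases_mult smult_smult_mat intro!: bexI)

lemma pauli_group_mult:
  assumes Q: "Q \<in> pauli_group n" and R: "R \<in> pauli_group n"
  shows "Q * R \<in> pauli_group n"
proof -
  from Q obtain c a where c: "c \<in> phases" and a: "a \<in> pauli_idx n" and Qe: "Q = c \<cdot>\<^sub>m pauli n a"
    unfolding mem_pauli_group_iff by auto
  from R obtain c' b where c': "c' \<in> phases" and b: "b \<in> pauli_idx n" and Re: "R = c' \<cdot>\<^sub>m pauli n b"
    unfolding mem_pauli_group_iff by auto
  have "Q * R = (c * c') \<cdot>\<^sub>m (pauli n a * pauli n b)"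
    unfolding Qe Re
    by (simp add: mult_smult_assoc_mat[OF pauli_carrier(1) smult_carrier_mat[OF pauli_carrier(1)]]
      mult_smult_distrib[OF pauli_carrier(1) pauli_carrier(1)] smult_smult_mat mult.commute)
  also have "\<dots> = (c * c' * (\<Prod>k<n. sigma_phase (a!k) (b!k))) \<cdot>\<^sub>m pauli n (pauli_idx_mult a b)"
    by (simp add: pauli_mult[OF a b] smult_smult_mat)
  finally show ?thesis
    unfolding mem_pauli_group_iff using pauli_idx_mult_in[OF a b]
      phases_mult[OF phases_mult[OF c c'] prod_phases[OF sigma_phase_in_phases]] by blast
qed

lemma pauli_group_half_combination:
  assumes Q: "Q \<in> pauli_group n" and R: "R \<in> pauli_group n"
    and x: "x = 1 \<or> x = -1" and y: "y = 1 \<or> y = -1"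
  shows "((x + y) / 2) \<cdot>\<^sub>m Q + ((x - y) / 2) \<cdot>\<^sub>m R \<in> pauli_group n"
proof -
  have Qc: "Q \<in> carrier_mat (2^n) (2^n)" and Rc: "R \<in> carrier_mat (2^n) (2^n)"
    using Q R pauli_group_carrier by auto
  have "((x + y) / 2) \<cdot>\<^sub>m Q + ((x - y) / 2) \<cdot>\<^sub>m R = (if x = y then x \<cdot>\<^sub>m Q else x \<cdot>\<^sub>m R)"
    using x y Qc Rc by (auto intro!: eq_matI)
  moreover have "x \<in> phases" using x by (auto simp: phases_def)
  ultimately show ?thesis using pauli_group_smult[OF _ Q, of x] pauli_group_smult[OF _ R, of x]
    by (cases "x = y") auto
qed

lemma clifford_carrier: "U \<in> clifford n \<Longrightarrow> U \<in> carrier_mat (2^n) (2^n)"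
  unfolding clifford_def by auto

lemma clifford_unitary: "U \<in> clifford n \<Longrightarrow> U * adj U = 1\<^sub>m (2^n)" "U \<in> clifford n \<Longrightarrow> adj U * U = 1\<^sub>m (2^n)"
  unfolding clifford_def by auto

lemma clifford_adj: "U \<in> clifford n \<Longrightarrow> adj U \<in> clifford n"
  unfolding clifford_def by auto

lemma clifford_one: "1\<^sub>m (2^n) \<in> clifford n"
proof -
  have "1\<^sub>m (2^n) * P * 1\<^sub>m (2^n) = P" if "P \<in> pauli_group n" for P
    using pauli_group_carrier[OF that] by simp
  then show ?thesis unfolding clifford_def by auto
qed

lemma clifford_mult:
  assumes U: "U \<in> clifford n" and V: "V \<in> clifford n"
  shows "U * V \<in> clifford n"
proof -
  have Uc: "U \<in> carrier_mat (2^n) (2^n)" and Vc: "V \<in> carrier_mat (2^n) (2^n)"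
    using U V clifford_carrier by auto
  have aUV: "adj (U * V) = adj V * adj U" using adj_mult[OF Uc Vc] .
  have conj: "U * V * P * adj (U * V) = U * (V * P * adj V) * adj U"
    "adj (U * V) * P * (U * V) = adj V * (adj U * P * U) * V"
    if "P \<in> carrier_mat (2^n) (2^n)" for P
    unfolding aUV using Uc Vc that by (simp_all add: assoc_mult_square[where m="2^n"] mult_carrier_square)
  have "U * V * adj (U * V) = 1\<^sub>m (2^n)" "adj (U * V) * (U * V) = 1\<^sub>m (2^n)"
    using conj[OF one_carrier_mat] clifford_unitary[OF U] clifford_unitary[OF V] Uc Vc by simp_all
  moreover have "U * V * P * adj (U * V) \<in> pauli_group n" "adj (U * V) * P * (U * V) \<in> pauli_group n"
    if P: "P \<in> pauli_group n" for P
    using conj[OF pauli_group_carrier[OF P]] U V P unfolding clifford_def by auto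
  ultimately show ?thesis unfolding clifford_def using Uc Vc by auto
qed

lemma clifford_conj_pauli:
  assumes U: "U \<in> clifford n" and a: "a \<in> pauli_idx n"
  shows "\<exists>c\<in>phases. \<exists>b\<in>pauli_idx n. adj U * pauli n a * U = c \<cdot>\<^sub>m pauli n b"
  using U pauli_in_pauli_group[OF a] unfolding clifford_def mem_pauli_group_iff[symmetric] by auto

section \<open>Transitivity on the non-identity Paulis\<close>

lemma anticomm_sum_conj:
  fixes A E P :: "complex mat"
  assumes A: "A \<in> carrier_mat m m" and E: "E \<in> carrier_mat m m" and P: "P \<in> carrier_mat m m"
    and AA: "A * A = 1\<^sub>m m" and EE: "E * E = 1\<^sub>m m" and EA: "E * A = (-1) \<cdot>\<^sub>m (A * E)"
    and AP: "A * P = x \<cdot>\<^sub>m (P * A)" and EP: "E * P = y \<cdot>\<^sub>m (P * E)"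
  shows "(A + E) * P * (A + E) = (x + y) \<cdot>\<^sub>m P + (x - y) \<cdot>\<^sub>m (P * (A * E))"
proof -
  have AE: "A + E \<in> carrier_mat m m" using A E by simp
  have "(A + E) * P * (A + E) = (A * P + E * P) * (A + E)"
    using add_mult_distrib_mat[OF A E P] by simp
  also have "\<dots> = A * P * (A + E) + E * P * (A + E)"
    using add_mult_distrib_mat[OF mult_carrier_square[OF A P] mult_carrier_square[OF E P] AE] .
  also have "A * P * (A + E) = A * P * A + A * P * E"
    using mult_add_distrib_mat[OF mult_carrier_square[OF A P] A E] .
  also have "E * P * (A + E) = E * P * A + E * P * E"
    using mult_add_distrib_mat[OF mult_carrier_square[OF E P] A E] .
  also have "A * P * A = x \<cdot>\<^sub>m P"
    using A P AA by (simp add: AP mult_smult_assoc_mat[of _ m m] assoc_mult_square[where m=m] mult_carrier_square)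
  also have "A * P * E = x \<cdot>\<^sub>m (P * (A * E))"
    using A P E by (simp add: AP mult_smult_assoc_mat[of _ m m] assoc_mult_square[where m=m] mult_carrier_square)
  also have "E * P * A = (- y) \<cdot>\<^sub>m (P * (A * E))"
    using A P E by (simp add: EP EA mult_smult_assoc_mat[of _ m m] assoc_mult_square[where m=m]
        mult_carrier_square mult_smult_distrib[OF P mult_carrier_square[OF A E]] smult_smult_mat)
  also have "E * P * E = y \<cdot>\<^sub>m P"
    using E P EE by (simp add: EP mult_smult_assoc_mat[of _ m m] assoc_mult_square[where m=m] mult_carrier_square)
  finally show ?thesis
    by (intro eq_matI) (use A E P in \<open>auto simp: algebra_simps\<close>)
qed

text \<open>
  For anticommuting Hermitian involutions \<open>A\<close> and \<open>E\<close>, the matrix \<open>V = (A + E)/\<surd>2\<close> is a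
  Hermitian involution with \<open>V A V = E\<close>, and it sends an operator \<open>P\<close> that commutes or
  anticommutes with each of \<open>A\<close>, \<open>E\<close> to \<open>\<plusminus>P\<close> or \<open>\<plusminus>P A E\<close>. For Paulis it is therefore a Clifford
  unitary exchanging \<open>A\<close> and \<open>E\<close>.
\<close>

definition exchange :: "complex mat \<Rightarrow> complex mat \<Rightarrow> complex mat" where
  "exchange A E = complex_of_real (1 / sqrt 2) \<cdot>\<^sub>m (A + E)"

lemma exchange_conj:
  fixes A E P :: "complex mat"
  assumes A: "A \<in> carrier_mat m m" and E: "E \<in> carrier_mat m m" and P: "P \<in> carrier_mat m m"
    and AA: "A * A = 1\<^sub>m m" and EE: "E * E = 1\<^sub>m m" and EA: "E * A = (-1) \<cdot>\<^sub>m (A * E)"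
    and AP: "A * P = x \<cdot>\<^sub>m (P * A)" and EP: "E * P = y \<cdot>\<^sub>m (P * E)"
  shows "exchange A E * P * exchange A E = ((x + y) / 2) \<cdot>\<^sub>m P + ((x - y) / 2) \<cdot>\<^sub>m (P * (A * E))"
proof -
  define s where "s = complex_of_real (1 / sqrt 2)"
  have ss: "s * s = 1 / 2" unfolding s_def by (simp flip: of_real_mult)
  have AE: "A + E \<in> carrier_mat m m" using A E by simp
  have "exchange A E * P * exchange A E = (s * s) \<cdot>\<^sub>m ((A + E) * P * (A + E))"
    unfolding exchange_def s_def[symmetric] using AE P
    by (simp add: mult_smult_assoc_mat[of _ m m] mult_smult_distrib[of _ m m] smult_smult_mat mult_carrier_square)
  also have "\<dots> = (1 / 2) \<cdot>\<^sub>m ((x + y) \<cdot>\<^sub>m P + (x - y) \<cdot>\<^sub>m (P * (A * E)))"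
    unfolding ss anticomm_sum_conj[OF A E P AA EE EA AP EP] ..
  finally show ?thesis
    by (intro eq_matI) (use A E P in \<open>auto simp: field_simps\<close>)
qed

lemma exchange_paulis:
  assumes a: "a \<in> pauli_idx n" and e: "e \<in> pauli_idx n" and anti: "comm_sign n e a = -1"
  defines "V \<equiv> exchange (pauli n a) (pauli n e)"
  shows "V \<in> clifford n" and "V * pauli n a * adj V = pauli n e"
proof -
  let ?A = "pauli n a" and ?E = "pauli n e" and ?d = "2^n"
  have Vc: "V \<in> carrier_mat ?d ?d" unfolding V_def exchange_def by simp
  have adjV: "adj V = V"
    unfolding V_def exchange_def adj_smult adj_add[OF pauli_carrier(1) pauli_carrier(1)]
    by (simp add: adj_pauli[OF a] adj_pauli[OF e])
  have EA: "?E * ?A = (-1) \<cdot>\<^sub>m (?A * ?E)" using pauli_mult_commute[OF e a] anti by simp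
  note conj = exchange_conj[OF pauli_carrier(1) pauli_carrier(1) _
      pauli_mult_self[OF a] pauli_mult_self[OF e] EA, folded V_def]
  have "V * 1\<^sub>m ?d * V = ((1 + 1) / 2) \<cdot>\<^sub>m 1\<^sub>m ?d + ((1 - 1) / 2) \<cdot>\<^sub>m (1\<^sub>m ?d * (?A * ?E))"
    by (rule conj) auto
  then have VV: "V * V = 1\<^sub>m ?d" using Vc by (auto intro!: eq_matI)
  have "V * ?A * V = ((1 + (-1)) / 2) \<cdot>\<^sub>m ?A + ((1 - (-1)) / 2) \<cdot>\<^sub>m (?A * (?A * ?E))"
    by (rule conj) (use EA in auto)
  also have "\<dots> = ?A * (?A * ?E)" by (auto intro!: eq_matI)
  also have "\<dots> = ?E"
    by (simp add: pauli_mult_self[OF a] flip: assoc_mult_square[where m="?d"])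
  finally show "V * ?A * adj V = ?E" unfolding adjV .
  have conj_pauli: "V * pauli n p * V \<in> pauli_group n" if p: "p \<in> pauli_idx n" for p
    unfolding conj[OF pauli_carrier(1) pauli_mult_commute[OF a p] pauli_mult_commute[OF e p]]
    by (intro pauli_group_half_combination comm_sign_cases pauli_group_mult pauli_in_pauli_group p a e)
  have "V * Q * V \<in> pauli_group n" if Q: "Q \<in> pauli_group n" for Q
  proof -
    from Q obtain c p where c: "c \<in> phases" and p: "p \<in> pauli_idx n" and Qe: "Q = c \<cdot>\<^sub>m pauli n p"
      unfolding mem_pauli_group_iff by auto
    have "V * Q * V = c \<cdot>\<^sub>m (V * pauli n p * V)"
      unfolding Qe mult_smult_distrib[OF Vc pauli_carrier(1)]
      by (rule mult_smult_assoc_mat[OF mult_carrier_square[OF Vc pauli_carrier(1)] Vc])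
    then show ?thesis using pauli_group_smult[OF c conj_pauli[OF p]] by simp
  qed
  then show "V \<in> clifford n" unfolding clifford_def using Vc VV adjV by auto
qed

lemma comm_sign_eq_minus_one:
  assumes l: "l < n" and anti: "sigma_anticomm (e!l) (a!l)"
    and comm: "\<And>k. k < n \<Longrightarrow> k \<noteq> l \<Longrightarrow> \<not> sigma_anticomm (e!k) (a!k)"
  shows "comm_sign n e a = -1"
proof -
  have "comm_sign n e a = (\<Prod>k<n. if k = l then -1 else 1)"
    unfolding comm_sign_def by (rule prod.cong) (use anti comm in auto)
  also have "\<dots> = -1" using l by (simp add: prod.delta)
  finally show ?thesis .
qed

lemma exists_sigma_anticomm_both:
  "x \<noteq> 0 \<Longrightarrow> y \<noteq> 0 \<Longrightarrow> \<exists>v<4. sigma_anticomm v x \<and> sigma_anticomm v y"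
  unfolding sigma_anticomm_def by presburger

lemma exists_pauli_anticomm_on_common_qubit:
  assumes l: "l < n" and al: "a!l \<noteq> 0" and bl: "b!l \<noteq> 0"
  shows "\<exists>e\<in>pauli_idx n. comm_sign n e a = -1 \<and> comm_sign n e b = -1"
proof -
  obtain v where v: "v < 4" "sigma_anticomm v (a!l)" "sigma_anticomm v (b!l)"
    using exists_sigma_anticomm_both[OF al bl] by blast
  define e where "e = map (\<lambda>k. if k = l then v else 0) [0..<n]"
  have "e \<in> pauli_idx n" unfolding e_def by (rule map_in_pauli_idx) (use v in auto)
  moreover have "comm_sign n e a = -1" "comm_sign n e b = -1"
    using l v by (auto intro!: comm_sign_eq_minus_one[OF l] simp: e_def sigma_anticomm_def)
  ultimately show ?thesis by blast
qed

lemma exists_pauli_anticomm_on_two_qubits: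
  assumes ka: "ka < n" "a!ka \<noteq> 0" "b!ka = 0" and kb: "kb < n" "b!kb \<noteq> 0" "a!kb = 0"
  shows "\<exists>e\<in>pauli_idx n. comm_sign n e a = -1 \<and> comm_sign n e b = -1"
proof -
  obtain va where va: "va < 4" "sigma_anticomm va (a!ka)"
    using exists_sigma_anticomm_both[OF ka(2) ka(2)] by blast
  obtain vb where vb: "vb < 4" "sigma_anticomm vb (b!kb)"
    using exists_sigma_anticomm_both[OF kb(2) kb(2)] by blast
  have kk: "ka \<noteq> kb" using ka kb by auto
  define e where "e = map (\<lambda>k. if k = ka then va else if k = kb then vb else 0) [0..<n]"
  have e_nth: "e ! k = (if k = ka then va else if k = kb then vb else 0)" if "k < n" for k
    using that by (simp add: e_def)
  have "e \<in> pauli_idx n" unfolding e_def by (rule map_in_pauli_idx) (use va vb in auto)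
  moreover have "comm_sign n e a = -1"
  proof (rule comm_sign_eq_minus_one[OF ka(1)])
    show "sigma_anticomm (e!ka) (a!ka)" using e_nth[OF ka(1)] va by simp
    show "\<not> sigma_anticomm (e!k) (a!k)" if "k < n" "k \<noteq> ka" for k
      using that kb(3) by (cases "k = kb") (simp_all add: e_nth sigma_anticomm_def)
  qed
  moreover have "comm_sign n e b = -1"
  proof (rule comm_sign_eq_minus_one[OF kb(1)])
    show "sigma_anticomm (e!kb) (b!kb)" using e_nth[OF kb(1)] kk vb by simp
    show "\<not> sigma_anticomm (e!k) (b!k)" if "k < n" "k \<noteq> kb" for k
      using that ka(3) by (cases "k = ka") (simp_all add: e_nth sigma_anticomm_def)
  qed
  ultimately show ?thesis by blast
qed

lemma exists_pauli_anticomm_both: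
  assumes a: "a \<in> pauli_idx n" and b: "b \<in> pauli_idx n"
    and a0: "a \<noteq> replicate n 0" and b0: "b \<noteq> replicate n 0"
  shows "\<exists>e\<in>pauli_idx n. comm_sign n e a = -1 \<and> comm_sign n e b = -1"
proof -
  obtain ka where ka: "ka < n" "a!ka \<noteq> 0"
    using a0 pauli_idx_length[OF a] by (metis nth_equalityI length_replicate nth_replicate)
  obtain kb where kb: "kb < n" "b!kb \<noteq> 0"
    using b0 pauli_idx_length[OF b] by (metis nth_equalityI length_replicate nth_replicate)
  show ?thesis
  proof (cases "\<exists>l<n. a!l \<noteq> 0 \<and> b!l \<noteq> 0")
    case True
    then show ?thesis using exists_pauli_anticomm_on_common_qubit by blast
  next
    case False
    then show ?thesis using exists_pauli_anticomm_on_two_qubits[OF ka _ kb] ka kb by blast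
  qed
qed

lemma clifford_transitive_on_nonidentity_paulis:
  assumes a: "a \<in> pauli_idx n" and b: "b \<in> pauli_idx n"
    and a0: "a \<noteq> replicate n 0" and b0: "b \<noteq> replicate n 0"
  shows "\<exists>V\<in>clifford n. V * pauli n a * adj V = pauli n b"
proof -
  obtain e where e: "e \<in> pauli_idx n" and ea: "comm_sign n e a = -1" and eb: "comm_sign n e b = -1"
    using exists_pauli_anticomm_both[OF a b a0 b0] by blast
  define V1 where "V1 = exchange (pauli n a) (pauli n e)"
  define V2 where "V2 = exchange (pauli n e) (pauli n b)"
  have V1: "V1 \<in> clifford n" "V1 * pauli n a * adj V1 = pauli n e"
    unfolding V1_def using exchange_paulis[OF a e ea] by auto
  have V2: "V2 \<in> clifford n" "V2 * pauli n e * adj V2 = pauli n b"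
    unfolding V2_def using exchange_paulis[OF e b] eb comm_sign_commute by metis+
  have c1: "V1 \<in> carrier_mat (2^n) (2^n)" and c2: "V2 \<in> carrier_mat (2^n) (2^n)"
    using V1 V2 clifford_carrier by auto
  have "V2 * V1 * pauli n a * adj (V2 * V1) = V2 * (V1 * pauli n a * adj V1) * adj V2"
    using c1 c2 by (simp add: adj_mult[OF c2 c1] assoc_mult_square[where m="2^n"] mult_carrier_square)
  also have "\<dots> = pauli n b" using V1 V2 by simp
  finally show ?thesis using clifford_mult[OF V2(1) V1(1)] by blast
qed

section \<open>The Clifford orbit\<close>

lemma proj_carrier: "dim_vec z = m \<Longrightarrow> proj z \<in> carrier_mat m m"
  unfolding proj_def by auto

lemma mtrace_proj: "mtrace (proj z) = (\<Sum>i<dim_vec z. complex_of_real ((cmod (z $ i))\<^sup>2))"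
  unfolding mtrace_def proj_def
  by (auto intro!: sum.cong simp only: complex_norm_square) simp_all

lemma mtrace_clifford_conj:
  assumes U: "U \<in> clifford n" and M: "M \<in> carrier_mat (2^n) (2^n)"
  shows "mtrace (U * M * adj U) = mtrace M"
proof -
  have Uc: "U \<in> carrier_mat (2^n) (2^n)" using clifford_carrier[OF U] .
  have "mtrace (U * M * adj U) = mtrace (1\<^sub>m (2^n) * (U * M * adj U))" using Uc M by simp
  also have "\<dots> = mtrace (adj U * 1\<^sub>m (2^n) * U * M)" by (rule mtrace_mult_conj[OF Uc M]) simp
  also have "\<dots> = mtrace M" using clifford_unitary(2)[OF U] Uc M by simp
  finally show ?thesis .
qed

lemma mtrace_clifford_conj_mult:
  assumes U: "U \<in> clifford n"
    and A: "A \<in> carrier_mat (2^n) (2^n)" and B: "B \<in> carrier_mat (2^n) (2^n)"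
  shows "mtrace ((adj U * A * U) * (adj U * B * U)) = mtrace (A * B)"
proof -
  have Uc: "U \<in> carrier_mat (2^n) (2^n)" using clifford_carrier[OF U] .
  have "(adj U * A * U) * (adj U * B * U) = adj U * (A * B) * adj (adj U)"
    using Uc A B clifford_unitary[OF U]
    by (simp add: assoc_mult_square[where m="2^n"] mult_carrier_square
        flip: assoc_mult_square[where m="2^n", of U "adj U"])
  then show ?thesis
    using mtrace_clifford_conj[OF clifford_adj[OF U] mult_carrier_square[OF A B]] by simp
qed

text \<open>Injectivity of the induced map on Pauli labels comes from trace orthogonality.\<close>

lemma clifford_conj_permutes_paulis:
  assumes U: "U \<in> clifford n"
  obtains c p where "\<And>a. a \<in> pauli_idx n \<Longrightarrow> c a \<in> phases"
    and "bij_betw p (pauli_idx n) (pauli_idx n)"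
    and "\<And>a. a \<in> pauli_idx n \<Longrightarrow> adj U * pauli n a * U = c a \<cdot>\<^sub>m pauli n (p a)"
proof -
  obtain c p where c: "\<And>a. a \<in> pauli_idx n \<Longrightarrow> c a \<in> phases"
    and p: "\<And>a. a \<in> pauli_idx n \<Longrightarrow> p a \<in> pauli_idx n"
    and e: "\<And>a. a \<in> pauli_idx n \<Longrightarrow> adj U * pauli n a * U = c a \<cdot>\<^sub>m pauli n (p a)"
    using clifford_conj_pauli[OF U] by metis
  have "inj_on p (pauli_idx n)"
  proof (rule inj_onI, rule ccontr)
    fix a b assume a: "a \<in> pauli_idx n" and b: "b \<in> pauli_idx n" and pe: "p a = p b" and ne: "a \<noteq> b"
    have "c a * c b * 2^n = mtrace ((adj U * pauli n a * U) * (adj U * pauli n b * U))"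
      unfolding e[OF a] e[OF b] pe
      by (simp add: mtrace_smult_mult[of _ "2^n"] mult_smult_distrib[OF pauli_carrier(1) pauli_carrier(1)]
          mtrace_smult[OF mult_carrier_square[OF pauli_carrier(1) pauli_carrier(1)]]
          mtrace_pauli_mult[OF p[OF b] p[OF b]])
    also have "\<dots> = 0"
      using mtrace_clifford_conj_mult[OF U pauli_carrier(1) pauli_carrier(1)] mtrace_pauli_mult[OF a b] ne
      by simp
    finally show False using c[OF a] c[OF b] norm_phases by fastforce
  qed
  moreover have "p ` pauli_idx n = pauli_idx n"
    by (rule endo_inj_surj[OF finite_pauli_idx _ calculation]) (use p in auto)
  ultimately show thesis using that c e unfolding bij_betw_def by blast
qed

lemma char_l1_clifford_conj:
  assumes U: "U \<in> clifford n" and M: "M \<in> carrier_mat (2^n) (2^n)"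
  shows "char_l1 n (U * M * adj U) = char_l1 n M"
proof -
  obtain c p where c: "\<And>a. a \<in> pauli_idx n \<Longrightarrow> c a \<in> phases"
    and p: "bij_betw p (pauli_idx n) (pauli_idx n)"
    and e: "\<And>a. a \<in> pauli_idx n \<Longrightarrow> adj U * pauli n a * U = c a \<cdot>\<^sub>m pauli n (p a)"
    using clifford_conj_permutes_paulis[OF U] by metis
  have "char_l1 n (U * M * adj U) = (\<Sum>a\<in>pauli_idx n. cmod (mtrace (adj U * pauli n a * U * M)))"
    unfolding char_l1_def
    by (intro sum.cong refl) (simp add: mtrace_mult_conj[OF clifford_carrier[OF U] M])
  also have "\<dots> = (\<Sum>a\<in>pauli_idx n. cmod (mtrace (pauli n (p a) * M)))"
    by (intro sum.cong refl) (simp add: e mtrace_smult_mult[OF pauli_carrier(1) M] norm_mult norm_phases c)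
  also have "\<dots> = char_l1 n M"
    unfolding char_l1_def by (rule sum.reindex_bij_betw[OF p])
  finally show ?thesis .
qed

locale unit_state =
  fixes n :: nat and z :: "complex vec"
  assumes dim_z: "dim_vec z = 2^n" and norm_z: "(\<Sum>i<2^n. (cmod (z $ i))\<^sup>2) = 1"
begin

abbreviation "\<rho> \<equiv> proj z"
abbreviation "orbit \<equiv> clifford_orbit n z"

lemma rho_carrier: "\<rho> \<in> carrier_mat (2^n) (2^n)"
  using proj_carrier[OF dim_z] .

lemma mtrace_rho: "mtrace \<rho> = 1"
proof -
  have "mtrace \<rho> = complex_of_real (\<Sum>i<2^n. (cmod (z $ i))\<^sup>2)"
    unfolding mtrace_proj dim_z by simp
  then show ?thesis using norm_z by simp
qed

lemma mem_orbit_iff: "P \<in> orbit \<longleftrightarrow> (\<exists>U\<in>clifford n. P = U * \<rho> * adj U)"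
  unfolding clifford_orbit_def by auto

lemma orbit_carrier: "P \<in> orbit \<Longrightarrow> P \<in> carrier_mat (2^n) (2^n)"
  unfolding mem_orbit_iff using rho_carrier by (auto intro!: mult_carrier_square dest: clifford_carrier)

lemma rho_in_orbit: "\<rho> \<in> orbit"
  unfolding mem_orbit_iff using clifford_one rho_carrier by (metis adj_one left_mult_one_mat right_mult_one_mat)

lemma mtrace_orbit: "P \<in> orbit \<Longrightarrow> mtrace P = 1"
  unfolding mem_orbit_iff using mtrace_clifford_conj rho_carrier mtrace_rho by auto

lemma char_l1_orbit: "P \<in> orbit \<Longrightarrow> char_l1 n P = char_l1 n \<rho>"
  unfolding mem_orbit_iff using char_l1_clifford_conj rho_carrier by auto

lemma orbit_clifford_conj:
  assumes V: "V \<in> clifford n" and P: "P \<in> orbit"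
  shows "adj V * P * V \<in> orbit"
proof -
  obtain U where U: "U \<in> clifford n" and Pe: "P = U * \<rho> * adj U" using P unfolding mem_orbit_iff by auto
  have Uc: "U \<in> carrier_mat (2^n) (2^n)" and Vc: "V \<in> carrier_mat (2^n) (2^n)"
    using U V clifford_carrier by auto
  have "adj V * P * V = (adj V * U) * \<rho> * adj (adj V * U)"
    unfolding Pe adj_mult[OF adj_carrier_mat[OF Vc] Uc] using Uc Vc rho_carrier
    by (simp add: assoc_mult_square[where m="2^n"] mult_carrier_square)
  then show ?thesis unfolding mem_orbit_iff using clifford_mult[OF clifford_adj[OF V] U] by blast
qed

lemma sum_orbit_clifford_conj:
  assumes V: "V \<in> clifford n"
  shows "(\<Sum>P\<in>orbit. f (adj V * P * V)) = (\<Sum>P\<in>orbit. f P)"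
proof (rule sum.reindex_bij_witness[where i = "\<lambda>P. V * P * adj V" and j = "\<lambda>P. adj V * P * V"])
  have Vc: "V \<in> carrier_mat (2^n) (2^n)" using clifford_carrier[OF V] .
  fix P assume P: "P \<in> orbit"
  show "adj V * P * V \<in> orbit" using orbit_clifford_conj[OF V P] .
  show "V * P * adj V \<in> orbit" using orbit_clifford_conj[OF clifford_adj[OF V] P] by simp
  show "V * (adj V * P * V) * adj V = P"
    using Vc orbit_carrier[OF P] clifford_unitary[OF V]
    by (simp add: assoc_mult_square[where m="2^n"] mult_carrier_square
        flip: assoc_mult_square[where m="2^n", of V "adj V"])
  show "adj V * (V * P * adj V) * V = P"
    using Vc orbit_carrier[OF P] clifford_unitary[OF V]
    by (simp add: assoc_mult_square[where m="2^n"] mult_carrier_square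
        flip: assoc_mult_square[where m="2^n", of "adj V" V])
qed simp

text \<open>
  The orbit is finite because an orbit element is determined by its Pauli coefficients
  (Pauli expansion), and each of them is a phase times a Pauli coefficient of \<open>\<rho>\<close>.
  Finiteness matters: \<open>card\<close> of an infinite set is \<open>0\<close>.
\<close>

definition rho_coeff_multiples :: "complex set" where
  "rho_coeff_multiples = (\<lambda>(c,b). c * mtrace (pauli n b * \<rho>)) ` (phases \<times> pauli_idx n)"

lemma finite_rho_coeff_multiples: "finite rho_coeff_multiples"
  unfolding rho_coeff_multiples_def using finite_phases finite_pauli_idx by blast

lemma pauli_coeff_orbit:
  assumes P: "P \<in> orbit" and a: "a \<in> pauli_idx n"
  shows "mtrace (pauli n a * P) \<in> rho_coeff_multiples"
proof -
  obtain U where U: "U \<in> clifford n" and Pe: "P = U * \<rho> * adj U" using P unfolding mem_orbit_iff by auto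
  obtain c b where c: "c \<in> phases" and b: "b \<in> pauli_idx n" and e: "adj U * pauli n a * U = c \<cdot>\<^sub>m pauli n b"
    using clifford_conj_pauli[OF U a] by blast
  have "mtrace (pauli n a * P) = mtrace (adj U * pauli n a * U * \<rho>)"
    unfolding Pe using clifford_carrier[OF U] rho_carrier by (intro mtrace_mult_conj) auto
  also have "\<dots> = c * mtrace (pauli n b * \<rho>)"
    unfolding e using rho_carrier by (intro mtrace_smult_mult) auto
  finally show ?thesis unfolding rho_coeff_multiples_def using c b by force
qed

lemma finite_orbit: "finite orbit"
proof -
  let ?coeffs = "\<lambda>P. restrict (\<lambda>a. mtrace (pauli n a * P)) (pauli_idx n)"
  have "inj_on ?coeffs orbit"
  proof (rule inj_onI)
    fix P Q assume P: "P \<in> orbit" and Q: "Q \<in> orbit" and eq: "?coeffs P = ?coeffs Q"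
    show "P = Q"
    proof (rule eq_mat_if_pauli_coeffs_eq[OF orbit_carrier[OF P] orbit_carrier[OF Q]])
      fix a assume "a \<in> pauli_idx n"
      then show "mtrace (pauli n a * P) = mtrace (pauli n a * Q)" using fun_cong[OF eq, of a] by simp
    qed
  qed
  moreover have "?coeffs ` orbit \<subseteq> PiE (pauli_idx n) (\<lambda>_. rho_coeff_multiples)"
    using pauli_coeff_orbit by auto
  moreover have "finite (PiE (pauli_idx n) (\<lambda>_. rho_coeff_multiples))"
    by (intro finite_PiE finite_pauli_idx finite_rho_coeff_multiples)
  ultimately show ?thesis using finite_subset finite_image_iff by metis
qed

lemma card_orbit_pos: "card orbit > 0"
  using finite_orbit rho_in_orbit card_gt_0_iff by blast

definition orbit_l1 :: "complex mat \<Rightarrow> real" where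
  "orbit_l1 M = (\<Sum>P\<in>orbit. cmod (mtrace (P * M)))"

lemma povm_l1_eq_orbit_l1:
  assumes W: "W \<in> carrier_mat (2^n) (2^n)"
  shows "povm_l1 n z W = 2^n / card orbit * orbit_l1 W"
  unfolding povm_l1_def Let_def orbit_l1_def sum_distrib_left
  by (intro sum.cong refl) (simp add: mtrace_smult_mult[OF orbit_carrier W] norm_mult norm_divide norm_power)

lemma orbit_l1_clifford_conj:
  assumes V: "V \<in> clifford n" and M: "M \<in> carrier_mat (2^n) (2^n)"
  shows "orbit_l1 (V * M * adj V) = orbit_l1 M"
  unfolding orbit_l1_def
  using sum_orbit_clifford_conj[OF V, of "\<lambda>Q. cmod (mtrace (Q * M))"]
  by (simp add: mtrace_mult_conj[OF clifford_carrier[OF V] M orbit_carrier])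

lemma orbit_l1_nonidentity_eq:
  assumes a: "a \<in> pauli_idx n" and b: "b \<in> pauli_idx n"
    and a0: "a \<noteq> replicate n 0" and b0: "b \<noteq> replicate n 0"
  shows "orbit_l1 (pauli n b) = orbit_l1 (pauli n a)"
proof -
  obtain V where "V \<in> clifford n" and "V * pauli n a * adj V = pauli n b"
    using clifford_transitive_on_nonidentity_paulis[OF a b a0 b0] by blast
  then show ?thesis using orbit_l1_clifford_conj[of V "pauli n a"] by simp
qed

lemma orbit_l1_identity: "orbit_l1 (1\<^sub>m (2^n)) = card orbit"
proof -
  have "orbit_l1 (1\<^sub>m (2^n)) = (\<Sum>P\<in>orbit. 1)"
    unfolding orbit_l1_def by (intro sum.cong refl) (simp add: mtrace_orbit right_mult_one_mat[OF orbit_carrier])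
  then show ?thesis by simp
qed

lemma sum_orbit_l1_paulis: "(\<Sum>a\<in>pauli_idx n. orbit_l1 (pauli n a)) = card orbit * char_l1 n \<rho>"
proof -
  have "(\<Sum>a\<in>pauli_idx n. orbit_l1 (pauli n a)) = (\<Sum>P\<in>orbit. char_l1 n P)"
    unfolding orbit_l1_def char_l1_def
    by (subst sum.swap) (intro sum.cong refl, simp add: mtrace_comm[OF orbit_carrier pauli_carrier(1)])
  also have "\<dots> = card orbit * char_l1 n \<rho>" by (simp add: char_l1_orbit)
  finally show ?thesis .
qed

lemma orbit_l1_nonidentity:
  assumes w: "w \<in> pauli_idx n" and w0: "w \<noteq> replicate n 0"
  shows "(4^n - 1) * orbit_l1 (pauli n w) = card orbit * (char_l1 n \<rho> - 1)"
proof -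
  let ?R = "pauli_idx n - {replicate n 0}"
  have "(\<Sum>a\<in>?R. orbit_l1 (pauli n a)) = (\<Sum>a\<in>?R. orbit_l1 (pauli n w))"
    by (intro sum.cong refl) (auto intro: orbit_l1_nonidentity_eq[OF w _ w0])
  also have "\<dots> = (4^n - 1) * orbit_l1 (pauli n w)"
    using card_pauli_idx replicate_0_in_pauli_idx finite_pauli_idx
    by (simp add: card_Diff_singleton of_nat_diff)
  moreover have "card orbit * char_l1 n \<rho> = card orbit + (\<Sum>a\<in>?R. orbit_l1 (pauli n a))"
    using sum.remove[OF finite_pauli_idx[of n] replicate_0_in_pauli_idx[of n],
        of "\<lambda>a. orbit_l1 (pauli n a)"]
    by (simp add: sum_orbit_l1_paulis orbit_l1_identity pauli_replicate_0)
  ultimately have "card orbit * char_l1 n \<rho> = card orbit + (4^n - 1) * orbit_l1 (pauli n w)"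
    by simp
  then show ?thesis by (simp add: algebra_simps)
qed

end

theorem theorem2:
  fixes n :: nat and z :: "complex vec" and W :: "complex mat"
  assumes "dim_vec z = 2 ^ n"
    and "(\<Sum>i<2 ^ n. (cmod (z $ i))\<^sup>2) = 1"
    and "W \<in> pauli_ops n"
    and "W \<noteq> 1\<^sub>m (2 ^ n)"
  shows "povm_l1 n z W
    = (char_l1 n (proj z) - 1) / ((real (2 ^ n) + 1) * (real (2 ^ n) - 1)) * trace_norm W"
proof -
  interpret unit_state n z using assms(1,2) by unfold_locales
  obtain w where w: "w \<in> pauli_idx n" and We: "W = pauli n w"
    using assms(3) unfolding pauli_ops_def by auto
  have w0: "w \<noteq> replicate n 0" using assms(4) We pauli_replicate_0 by auto
  then have "n \<noteq> 0" using w unfolding pauli_idx_def by auto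
  then have d2: "(real (2 ^ n) + 1) * (real (2 ^ n) - 1) = 4^n - 1" and "(4::real)^n > 1"
    by (simp_all add: algebra_simps flip: power_mult_distrib)
  then have "orbit_l1 W = card orbit * (char_l1 n \<rho> - 1) / (4^n - 1)"
    using orbit_l1_nonidentity[OF w w0] We by (simp add: field_simps)
  then show ?thesis
    using povm_l1_eq_orbit_l1 card_orbit_pos trace_norm_pauli[OF w] We d2 by simp
qed

end
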